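(* Let $\mathbb{K}$ be an algebraically closed field of characteristic zero, $\mathcal{C}\subset\mathbb{K}^2$ an affine irreducible plane curve defined by an irreducible polynomial $f$, $A=(a,b)\in\mathbb{K}^2$, $d\in\mathbb{K}\setminus\{0\}$, and assume $\mathcal{C}_0\neq\emptyset$. Then: (1) if $\Omega$ is a non-empty open subset of $\mathcal{C}$, then $\pi_1(\pi_2^{-1}(\Omega))$ is a non-empty Zariski dense subset of $\mathfrak{C}(\mathcal{C},A,d)$; (2) if $\mathcal{C}$ is not the circle centered at $A$ of radius $d$, and $\Omega$ is a non-empty open subset of an irreducible component of $\mathfrak{C}(\mathcal{C},A,d)$, then $\pi_2(\pi_1^{-1}(\Omega))$ is a non-empty Zariski dense subset of $\mathcal{C}$.
   Context: $\mathfrak{B}(\mathcal{C},A,d)\subset\mathbb{K}^2\times\mathbb{K}^2\times\mathbb{K}$ is the algebraic set of $(\bar x,\bar y,w)$ with $f(y_1,y_2)=0$, $(x_1-y_1)^2+(x_2-y_2)^2=d^2$, $(y_2-b)(x_1-y_1)-(y_1-a)(x_2-y_2)=0$, $w((y_1-a)^2+(y_2-b)^2)=1$; $\pi_1,\pi_2$ are the projections $(\bar x,\bar y,w)\mapsto\bar x$ and $\mapsto\bar y$ restricted to $\mathfrak{B}(\mathcal{C},A,d)$. The conchoid $\mathfrak{C}(\mathcal{C},A,d)$ is the Zariski closure of $\pi_1(\mathfrak{B}(\mathcal{C},A,d))$. $\mathcal{C}_0=\{(p_1,p_2)\in\mathcal{C}:(p_1-a)^2+(p_2-b)^2\neq0\}$.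 The circle centered at $A$ of radius $d$ is $(y_1-a)^2+(y_2-b)^2=d^2$. *)

theory Defs
  imports "HOL-Computational_Algebra.Computational_Algebra"
begin

text \<open>Bivariate polynomials over a field are represented as 'a poly poly:
  g = sum_i c_i(X) Y^i with c_i in 'a poly; eval2 g (x,y) = sum_i c_i(x) y^i.\<close>

definition eval2 :: "'a::comm_ring_1 poly poly \<Rightarrow> 'a \<times> 'a \<Rightarrow> 'a" where
  "eval2 g p = poly (map_poly (\<lambda>c. poly c (fst p)) g) (snd p)"

definition zero_set :: "'a::comm_ring_1 poly poly set \<Rightarrow> ('a \<times> 'a) set" where
  "zero_set P = {p. \<forall>g\<in>P. eval2 g p = 0}"

definition zar_closed :: "('a::comm_ring_1 \<times> 'a) set \<Rightarrow> bool" where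
  "zar_closed S \<longleftrightarrow> (\<exists>P. S = zero_set P)"

definition zar_closure :: "('a::comm_ring_1 \<times> 'a) set \<Rightarrow> ('a \<times> 'a) set" where
  "zar_closure S = \<Inter>{T. zar_closed T \<and> S \<subseteq> T}"

definition zar_open_in :: "('a::comm_ring_1 \<times> 'a) set \<Rightarrow> ('a \<times> 'a) set \<Rightarrow> bool" where
  "zar_open_in X U \<longleftrightarrow> (\<exists>T. zar_closed T \<and> U = X - T)"

definition zar_dense_in :: "('a::comm_ring_1 \<times> 'a) set \<Rightarrow> ('a \<times> 'a) set \<Rightarrow> bool" where
  "zar_dense_in X S \<longleftrightarrow> S \<subseteq> X \<and> X \<subseteq> zar_closure S"

definition zar_irreducible :: "('a::comm_ring_1 \<times> 'a) set \<Rightarrow> bool" where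
  "zar_irreducible Z \<longleftrightarrow> Z \<noteq> {} \<and>
     (\<forall>Z1 Z2. zar_closed Z1 \<and> zar_closed Z2 \<and> Z \<subseteq> Z1 \<union> Z2 \<longrightarrow> Z \<subseteq> Z1 \<or> Z \<subseteq> Z2)"

definition irred_component :: "('a::comm_ring_1 \<times> 'a) set \<Rightarrow> ('a \<times> 'a) set \<Rightarrow> bool" where
  "irred_component X Z \<longleftrightarrow> Z \<subseteq> X \<and> zar_closed Z \<and> zar_irreducible Z \<and>
     (\<forall>Z'. Z \<subseteq> Z' \<and> Z' \<subseteq> X \<and> zar_closed Z' \<and> zar_irreducible Z' \<longrightarrow> Z' = Z)"

definition conchB ::
  "'a::comm_ring_1 poly poly \<Rightarrow> 'a \<Rightarrow> 'a \<Rightarrow> 'a \<Rightarrow> (('a \<times> 'a) \<times> ('a \<times> 'a) \<times> 'a) set" where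
  "conchB f a b d = {((x1, x2), (y1, y2), w).
      eval2 f (y1, y2) = 0 \<and>
      (x1 - y1)^2 + (x2 - y2)^2 = d^2 \<and>
      (y2 - b) * (x1 - y1) - (y1 - a) * (x2 - y2) = 0 \<and>
      w * ((y1 - a)^2 + (y2 - b)^2) = 1}"

definition pi1 :: "('a \<times> 'a) \<times> ('a \<times> 'a) \<times> 'a \<Rightarrow> 'a \<times> 'a" where
  "pi1 t = fst t"

definition pi2 :: "('a \<times> 'a) \<times> ('a \<times> 'a) \<times> 'a \<Rightarrow> 'a \<times> 'a" where
  "pi2 t = fst (snd t)"

definition conchoid :: "'a::comm_ring_1 poly poly \<Rightarrow> 'a \<Rightarrow> 'a \<Rightarrow> 'a \<Rightarrow> ('a \<times> 'a) set" where
  "conchoid f a b d = zar_closure (pi1 ` conchB f a b d)"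

end

theory Submission
  imports Defs
begin

text \<open>Write \<open>t\<close> for the ratio with \<open>x - y = t (y - A)\<close>; a point \<open>y\<close> of \<open>\<C>\<^sub>0\<close> carries the two conchoid
  points with \<open>t\<^sup>2 |y - A|\<^sup>2 = d\<^sup>2\<close>. For a polynomial \<open>F\<close>, splitting \<open>F(y + t (y - A))\<close> into even and
  odd parts in \<open>t\<close> and clearing the denominator \<open>|y - A|\<^sup>2\<close> shows that the points \<open>y\<close> over which
  \<open>F\<close> vanishes on the whole fibre form a Zariski closed set. A closed subset of the irreducible
  curve \<open>\<C>\<close> is either finite or all of \<open>\<C>\<close> (an irreducible \<open>f\<close> shares only finitely many zeros
  with a polynomial it does not divide), and nonempty open subsets of \<open>\<C>\<close> are cofinite, hence
  infinite. So a polynomial vanishing on the conchoid points over a nonempty open \<open>\<Omega>\<close> vanishes on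
  all of \<open>\<pi>\<^sub>1(\<B>)\<close>, which is (1). For (2), if \<open>\<pi>\<^sub>2(\<pi>\<^sub>1\<^sup>-\<^sup>1(\<Omega>))\<close> were finite, (1) applied to its
  complement in \<open>\<C>\<close> would give a dense subset of the conchoid avoiding \<open>\<Omega>\<close>; then the component
  \<open>Z \<supseteq> \<Omega>\<close> would lie in the closure of the other components, which a plane closed set, being a
  finite union of curves and points, does not allow. An infinite subset of \<open>\<C>\<close> is dense.\<close>

section \<open>Bivariate polynomials and their zeros\<close>

definition eval_X :: "'a::comm_ring_1 \<Rightarrow> 'a poly poly \<Rightarrow> 'a poly" where
  "eval_X x g = map_poly (\<lambda>c. poly c x) g"

lemma coeff_eval_X: "coeff (eval_X x g) i = poly (coeff g i) x"
  by (simp add: eval_X_def coeff_map_poly)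

lemma eval_X_add: "eval_X x (p + q) = eval_X x p + eval_X x q"
  by (rule poly_eqI) (simp add: coeff_eval_X)

lemma eval_X_mult: "eval_X x (p * q) = eval_X x p * eval_X x q"
  by (rule poly_eqI) (simp add: coeff_eval_X coeff_mult poly_sum)

lemma eval_X_pCons: "eval_X x (pCons c g) = pCons (poly c x) (eval_X x g)"
  by (rule poly_eqI) (simp add: coeff_eval_X coeff_pCons split: nat.split)

lemma eval2_eq_poly_eval_X: "eval2 g (x, y) = poly (eval_X x g) y"
  by (simp add: eval2_def eval_X_def)

lemma eval2_add [simp]: "eval2 (p + q) z = eval2 p z + eval2 q z"
  by (cases z) (simp add: eval2_eq_poly_eval_X eval_X_add)

lemma eval2_mult [simp]: "eval2 (p * q) z = eval2 p z * eval2 q z"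
  by (cases z) (simp add: eval2_eq_poly_eval_X eval_X_mult)

lemma eval2_pCons [simp]: "eval2 (pCons c g) z = poly c (fst z) + snd z * eval2 g z"
  by (cases z) (simp add: eval2_eq_poly_eval_X eval_X_pCons)

lemma eval2_0 [simp]: "eval2 0 z = 0"
  by (simp add: eval2_def)

lemma eval2_dvd: "h dvd g \<Longrightarrow> eval2 h z = 0 \<Longrightarrow> eval2 g z = 0"
  by (erule dvdE) simp

lemma zero_set_singleton: "zero_set {g} = {z. eval2 g z = 0}"
  by (simp add: zero_set_def)

lemma zero_set_dvd_subset: "h dvd g \<Longrightarrow> zero_set {h} \<subseteq> zero_set {g}"
  by (auto simp: zero_set_singleton intro: eval2_dvd)

lemma vertical_line_dvd_iff:
  fixes g :: "'a::field poly poly"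
  shows "[:[:-x, 1:]:] dvd g \<longleftrightarrow> eval_X x g = 0"
  by (simp add: const_poly_dvd_iff poly_eq_0_iff_dvd[symmetric] poly_eq_iff coeff_eval_X)

lemma eval2_eq_zero_imp_zero:
  fixes g :: "'a::field_char_0 poly poly"
  assumes "\<And>z. eval2 g z = 0"
  shows "g = 0"
proof -
  have "poly (coeff g i) x = 0" for i x
    using assms[of "(x, _)"] by (metis eval2_eq_poly_eval_X poly_all_0_iff_0 coeff_eval_X coeff_0)
  then have "coeff g i = 0" for i
    by (metis poly_all_0_iff_0)
  then show ?thesis
    by (simp add: poly_eq_iff)
qed

section \<open>Irreducible plane curves\<close>

lemma irreducible_degree_0_assoc_vertical_line:
  fixes h :: "'a::alg_closed_field poly poly"
  assumes irr: "irreducible h" and deg: "degree h = 0"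
  obtains x where "h dvd [:[:-x, 1:]:]" "[:[:-x, 1:]:] dvd h"
proof -
  obtain p where h: "h = [:p:]" using deg by (rule degree_eq_zeroE)
  have "p \<noteq> 0" "\<not> is_unit p"
    using irr by (auto simp: h irreducible_def is_unit_const_poly_iff)
  then have "degree p > 0" by (simp add: is_unit_iff_degree)
  then obtain x where "poly p x = 0" using alg_closed_imp_poly_has_root by blast
  then have L: "[:[:-x, 1:]:] dvd h" by (simp add: h poly_eq_0_iff_dvd)
  moreover have "\<not> is_unit [:[:-x, 1:]:]" by (simp add: is_unit_const_poly_iff is_unit_poly_iff)
  ultimately have "h dvd [:[:-x, 1:]:]" using irr by (auto simp: irreducible_altdef)
  then show thesis using L by (rule that)
qed

lemma irreducible_eval_X_nonzero:
  fixes h :: "'a::field poly poly"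
  assumes irr: "irreducible h" and deg: "degree h > 0"
  shows "eval_X x h \<noteq> 0"
proof
  assume "eval_X x h = 0"
  then have "[:[:-x, 1:]:] dvd h" by (simp add: vertical_line_dvd_iff)
  moreover have "\<not> is_unit [:[:-x, 1:]:]" by (simp add: is_unit_const_poly_iff is_unit_poly_iff)
  ultimately have "h dvd [:[:-x, 1:]:]" using irr by (auto simp: irreducible_altdef)
  then show False using deg dvd_imp_degree_le[of h "[:[:-x, 1:]:]"] by simp
qed

lemma vertical_line_dvd_mult_iff:
  fixes p q :: "'a::field poly poly"
  shows "[:[:-x, 1:]:] dvd p * q \<longleftrightarrow> [:[:-x, 1:]:] dvd p \<or> [:[:-x, 1:]:] dvd q"
  by (simp add: vertical_line_dvd_iff eval_X_mult)

text \<open>Gauss's lemma for \<open>K[X][Y]\<close>: the linear factors \<open>X - x\<close> of \<open>c\<close> are prime and can be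
  cancelled one at a time.\<close>

lemma smult_eq_mult_imp_factorization:
  fixes p q r :: "'a::alg_closed_field poly poly"
  assumes "c \<noteq> 0" "smult c p = q * r"
  obtains a b q' r' where "q = smult a q'" "r = smult b r'" "p = q' * r'"
  using assms
proof (induction "degree c" arbitrary: c q r thesis rule: less_induct)
  case less
  show ?case
  proof (cases "degree c = 0")
    case True
    then obtain c0 where c: "c = [:c0:]" "c0 \<noteq> 0" using less.prems(2) by (metis degree_eq_zeroE pCons_eq_0_iff)
    have "p = smult [:inverse c0:] (smult c p)" using c by (simp flip: one_pCons)
    then have "p = smult [:inverse c0:] q * r" using less.prems(3) by simp
    moreover have "q = smult [:c0:] (smult [:inverse c0:] q)" using c by (simp flip: one_pCons)
    ultimately show ?thesis by (intro less.prems(1)[of "[:c0:]" "smult [:inverse c0:] q" 1 r]) auto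
  next
    case False
    then obtain x where "poly c x = 0"
      using alg_closed_imp_poly_has_root by blast
    then obtain c1 where c: "c = [:-x, 1:] * c1" by (metis dvdE poly_eq_0_iff_dvd)
    have "c1 \<noteq> 0" using c less.prems(2) by auto
    moreover have "degree c = Suc (degree c1)" unfolding c using \<open>c1 \<noteq> 0\<close> by (subst degree_mult_eq) auto
    ultimately have c1: "c1 \<noteq> 0" "degree c1 < degree c" by auto
    define L :: "'a poly poly" where "L = [:[:-x, 1:]:]"
    have "L \<noteq> 0" by (simp add: L_def)
    have L: "L * smult c1 p = q * r" using less.prems(3) c by (simp add: L_def)
    then have "L dvd q * r" by (metis dvd_triv_left)
    then consider q1 where "q = L * q1" | r1 where "r = L * r1"
      unfolding L_def vertical_line_dvd_mult_iff by (auto simp: dvd_def)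
    then show ?thesis
    proof cases
      case 1
      then have "L * smult c1 p = L * (q1 * r)" using L by (simp only: mult.assoc)
      then have "smult c1 p = q1 * r" using \<open>L \<noteq> 0\<close> by (metis mult_left_cancel)
      then obtain a b q' r' where "q1 = smult a q'" "r = smult b r'" "p = q' * r'"
        using less.hyps c1 by blast
      then show ?thesis using 1 by (intro less.prems(1)[of "[:-x, 1:] * a" q' b r']) (auto simp: L_def)
    next
      case 2
      then have "L * smult c1 p = L * (q * r1)" using L by (simp only: mult.left_commute)
      then have "smult c1 p = q * r1" using \<open>L \<noteq> 0\<close> by (metis mult_left_cancel)
      then obtain a b q' r' where "q = smult a q'" "r1 = smult b r'" "p = q' * r'"
        using less.hyps c1 by blast
      then show ?thesis using 2 by (intro less.prems(1)[of a q' "[:-x, 1:] * b" r']) (auto simp: L_def)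
    qed
  qed
qed

lemma irreducible_smult_eq_mult_imp_dvd:
  fixes h q r :: "'a::alg_closed_field poly poly"
  assumes irr: "irreducible h" and "c \<noteq> 0" "smult c h = q * r" "degree r > 0"
  shows "h dvd r"
proof -
  obtain b q' r' where r: "r = smult b r'" and h: "h = q' * r'"
    using smult_eq_mult_imp_factorization[OF assms(2,3)] by metis
  have "degree r' > 0" using assms(4) degree_smult_le[of b r'] unfolding r by linarith
  then have "\<not> is_unit r'" by (auto simp: is_unit_poly_iff)
  then have "is_unit q'" using irreducibleD[OF irr h] by blast
  then have "h dvd r'" using h by simp
  then show ?thesis using r by (simp add: dvd_smult)
qed

lemma irreducible_dvd_smult_imp_dvd:
  fixes h g :: "'a::alg_closed_field poly poly"
  assumes irr: "irreducible h" and deg: "degree h > 0" and "c \<noteq> 0" "h dvd smult c g"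
  shows "h dvd g"
proof -
  obtain k where "smult c g = h * k" using assms(4) by (rule dvdE)
  then obtain a h' where h: "h = smult a h'" and "h' dvd g"
    using smult_eq_mult_imp_factorization[OF assms(3)] by (metis dvd_triv_left)
  have "degree h' > 0" using deg degree_smult_le[of a h'] unfolding h by linarith
  then have "\<not> is_unit h'" by (auto simp: is_unit_poly_iff)
  then have "is_unit [:a:]" using irreducibleD[OF irr, of "[:a:]" h'] h by auto
  moreover have "h = [:a:] * h'" using h by simp
  ultimately have "h dvd h'" by (metis mult_unit_dvd_iff' dvd_refl)
  then show ?thesis using \<open>h' dvd g\<close> by (rule dvd_trans)
qed

text \<open>A B\'ezout identity with a nonzero constant in \<open>K[X]\<close> (a resultant in disguise): a
  nonzero element \<open>w\<close> of minimal \<open>Y\<close>-degree in the ideal \<open>(h, g)\<close> pseudo-divides every element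
  of the ideal, and Gauss's lemma then forces \<open>w\<close> to be constant in \<open>Y\<close>.\<close>

lemma irreducible_not_dvd_imp_const_combination:
  fixes h g :: "'a::alg_closed_field poly poly"
  assumes irr: "irreducible h" and deg: "degree h > 0" and nd: "\<not> h dvd g"
  obtains u v r where "r \<noteq> 0" "u * h + v * g = [:r:]"
proof -
  define I where "I = {z. \<exists>u v. z = u * h + v * g}"
  have hI: "h \<in> I" unfolding I_def by (intro CollectI exI[of _ 1] exI[of _ 0]) simp
  have gI: "g \<in> I" unfolding I_def by (intro CollectI exI[of _ 0] exI[of _ 1]) simp
  have "g \<noteq> 0" using nd by auto
  then obtain w where wI: "w \<in> I" "w \<noteq> 0"
    and min: "\<And>w'. w' \<in> I \<Longrightarrow> w' \<noteq> 0 \<Longrightarrow> degree w \<le> degree w'"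
    using gI ex_has_least_nat[of "\<lambda>w. w \<in> I \<and> w \<noteq> 0" g degree] by blast
  have pseudo_div: "\<exists>a q. a \<noteq> 0 \<and> smult a z = w * q" if zI: "z \<in> I" for z
  proof -
    obtain a q where aq: "a \<noteq> 0" "smult a z = w * q + pseudo_mod z w"
      using pseudo_mod(1)[OF wI(2)] by blast
    obtain u v where w: "w = u * h + v * g" using wI(1) unfolding I_def by blast
    obtain u' v' where z: "z = u' * h + v' * g" using zI unfolding I_def by blast
    have "pseudo_mod z w = smult a z - w * q" using aq(2) by simp
    also have "\<dots> = (smult a u' - q * u) * h + (smult a v' - q * v) * g"
      unfolding w z by (simp add: algebra_simps smult_add_right)
    finally have "pseudo_mod z w \<in> I" by (auto simp: I_def)
    then have "pseudo_mod z w = 0"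
      using pseudo_mod(2)[OF wI(2), of z] min by force
    with aq show ?thesis by auto
  qed
  have "degree w = 0"
  proof (rule ccontr)
    assume "degree w \<noteq> 0"
    moreover obtain a q where "a \<noteq> 0" "smult a h = q * w"
      using pseudo_div[OF hI] by (auto simp: mult.commute)
    ultimately have "h dvd w" using irreducible_smult_eq_mult_imp_dvd[OF irr] by blast
    moreover obtain a' q' where "a' \<noteq> 0" "smult a' g = w * q'" using pseudo_div[OF gI] by blast
    ultimately have "h dvd smult a' g" by simp
    with irreducible_dvd_smult_imp_dvd[OF irr deg \<open>a' \<noteq> 0\<close>] nd show False by blast
  qed
  then obtain r where "w = [:r:]" by (rule degree_eq_zeroE)
  with wI that show thesis unfolding I_def by auto
qed

lemma finite_common_zeros:
  fixes h g :: "'a::alg_closed_field poly poly"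
  assumes irr: "irreducible h" and nd: "\<not> h dvd g"
  shows "finite (zero_set {h} \<inter> zero_set {g})"
proof (cases "degree h = 0")
  case True
  then obtain x where hL: "h dvd [:[:-x, 1:]:]" "[:[:-x, 1:]:] dvd h"
    using irreducible_degree_0_assoc_vertical_line[OF irr] by blast
  have "eval_X x g \<noteq> 0"
    using nd hL(1) by (metis dvd_trans vertical_line_dvd_iff)
  then have "finite (Sigma {x} (\<lambda>x. {y. poly (eval_X x g) y = 0}))"
    by (intro finite_SigmaI) (auto intro: poly_roots_finite)
  moreover have "zero_set {h} \<inter> zero_set {g} \<subseteq> Sigma {x} (\<lambda>x. {y. poly (eval_X x g) y = 0})"
    using zero_set_dvd_subset[OF hL(1)] by (auto simp: zero_set_singleton eval2_eq_poly_eval_X)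
  ultimately show ?thesis by (rule finite_subset[rotated])
next
  case False
  obtain u v r where r: "r \<noteq> 0" "u * h + v * g = [:r:]"
    using irreducible_not_dvd_imp_const_combination[OF irr _ nd] False by blast
  have "finite (Sigma {x. poly r x = 0} (\<lambda>x. {y. poly (eval_X x h) y = 0}))"
    using r(1) False irreducible_eval_X_nonzero[OF irr]
    by (intro finite_SigmaI poly_roots_finite) auto
  moreover have "zero_set {h} \<inter> zero_set {g} \<subseteq> Sigma {x. poly r x = 0} (\<lambda>x. {y. poly (eval_X x h) y = 0})"
  proof (clarsimp simp: zero_set_singleton)
    fix x y assume "eval2 h (x, y) = 0" "eval2 g (x, y) = 0"
    then have "eval2 (u * h + v * g) (x, y) = 0" by simp
    then show "poly r x = 0 \<and> poly (eval_X x h) y = 0"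
      using \<open>eval2 h (x, y) = 0\<close> by (simp add: r(2) flip: eval2_eq_poly_eval_X)
  qed
  ultimately show ?thesis by (rule finite_subset[rotated])
qed

lemma irreducible_zero_set_infinite:
  fixes h :: "'a::{alg_closed_field, field_char_0} poly poly"
  assumes irr: "irreducible h"
  shows "infinite (zero_set {h})"
proof (cases "degree h = 0")
  case True
  then obtain x where "[:[:-x, 1:]:] dvd h"
    using irreducible_degree_0_assoc_vertical_line[OF irr] by blast
  then have "range (Pair x) \<subseteq> zero_set {h}"
    using zero_set_dvd_subset by (fastforce simp: zero_set_singleton)
  moreover have "infinite (range (Pair x :: 'a \<Rightarrow> 'a \<times> 'a))"
    using infinite_UNIV_char_0 finite_imageD by (metis inj_on_def prod.inject)
  ultimately show ?thesis by (metis finite_subset)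
next
  case False
  have "{x. poly (lead_coeff h) x \<noteq> 0} \<subseteq> fst ` zero_set {h}"
  proof
    fix x assume "x \<in> {x. poly (lead_coeff h) x \<noteq> 0}"
    then have "coeff (eval_X x h) (degree h) \<noteq> 0" by (simp add: coeff_eval_X)
    then have "degree (eval_X x h) > 0" using False le_degree by fastforce
    then obtain y where "poly (eval_X x h) y = 0" using alg_closed_imp_poly_has_root by blast
    then have "(x, y) \<in> zero_set {h}" by (simp add: zero_set_singleton eval2_eq_poly_eval_X)
    then show "x \<in> fst ` zero_set {h}" by force
  qed
  moreover have "infinite {x. poly (lead_coeff h) x \<noteq> (0::'a)}"
  proof -
    have "finite {x. poly (lead_coeff h) x = 0}" using False by (intro poly_roots_finite) auto
    then show ?thesis using infinite_UNIV_char_0[where 'a='a]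
      by (metis (no_types) Collect_neg_eq Diff_infinite_finite Compl_eq_Diff_UNIV)
  qed
  ultimately show ?thesis using finite_subset by blast
qed

lemma curve_subset_or_finite_inter:
  fixes h :: "'a::alg_closed_field poly poly"
  assumes irr: "irreducible h" and "zar_closed T"
  shows "zero_set {h} \<subseteq> T \<or> finite (zero_set {h} \<inter> T)"
proof (rule disjCI)
  assume inf: "infinite (zero_set {h} \<inter> T)"
  obtain P where T: "T = zero_set P" using assms(2) by (auto simp: zar_closed_def)
  have "zero_set {h} \<subseteq> zero_set {g}" if "g \<in> P" for g
  proof -
    have "zero_set {h} \<inter> T \<subseteq> zero_set {h} \<inter> zero_set {g}"
      using that by (auto simp: T zero_set_def)
    then have "h dvd g" using inf finite_common_zeros[OF irr] finite_subset by blast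
    then show ?thesis by (rule zero_set_dvd_subset)
  qed
  then show "zero_set {h} \<subseteq> T" by (auto simp: T zero_set_def)
qed

section \<open>The Zariski topology of the plane\<close>

lemma zar_closed_zero_set [simp]: "zar_closed (zero_set P)"
  by (auto simp: zar_closed_def)

lemma zar_closed_empty: "zar_closed ({} :: ('a::comm_ring_1 \<times> 'a) set)"
proof -
  have "zero_set {1} = ({} :: ('a \<times> 'a) set)"
    by (simp add: zero_set_singleton eval2_def)
  then show ?thesis by (metis zar_closed_zero_set)
qed

lemma zar_closed_UNIV: "zar_closed (UNIV :: ('a::comm_ring_1 \<times> 'a) set)"
proof -
  have "zero_set {} = (UNIV :: ('a \<times> 'a) set)" by (simp add: zero_set_def)
  then show ?thesis by (metis zar_closed_zero_set)
qed

lemma zar_closed_Un: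
  fixes S T :: "('a::idom \<times> 'a) set"
  assumes "zar_closed S" "zar_closed T"
  shows "zar_closed (S \<union> T)"
proof -
  obtain P Q where S: "S = zero_set P" and T: "T = zero_set Q"
    using assms by (auto simp: zar_closed_def)
  have "S \<union> T = zero_set {p * q | p q. p \<in> P \<and> q \<in> Q}"
  proof (intro set_eqI iffI)
    fix z assume z: "z \<in> zero_set {p * q | p q. p \<in> P \<and> q \<in> Q}"
    have "eval2 p z * eval2 q z = 0" if "p \<in> P" "q \<in> Q" for p q
    proof -
      have "p * q \<in> {p * q | p q. p \<in> P \<and> q \<in> Q}" using that by blast
      then have "eval2 (p * q) z = 0" using z unfolding zero_set_def by blast
      then show ?thesis by simp
    qed
    then show "z \<in> S \<union> T" unfolding S T zero_set_def by auto
  qed (auto simp: S T zero_set_def)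
  then show ?thesis by simp
qed

lemma zar_closed_Inter:
  assumes "\<And>S. S \<in> F \<Longrightarrow> zar_closed S"
  shows "zar_closed (\<Inter> F)"
proof -
  have "\<Inter> F = zero_set (\<Union> {P. zero_set P \<in> F})"
    using assms unfolding zar_closed_def zero_set_def by blast
  then show ?thesis by simp
qed

lemma zar_closed_Int: "zar_closed S \<Longrightarrow> zar_closed T \<Longrightarrow> zar_closed (S \<inter> T)"
  using zar_closed_Inter[of "{S, T}"] by auto

lemma zar_closed_Union:
  fixes F :: "('a::idom \<times> 'a) set set"
  shows "finite F \<Longrightarrow> (\<And>S. S \<in> F \<Longrightarrow> zar_closed S) \<Longrightarrow> zar_closed (\<Union> F)"
  by (induction rule: finite_induct) (auto intro: zar_closed_empty zar_closed_Un)

lemma zar_closed_singleton: "zar_closed {z :: 'a::idom \<times> 'a}"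
proof -
  have "{z} = zero_set {[:[:-fst z, 1:]:], [:[:-snd z:], 1:]}"
    by (auto simp: zero_set_def prod_eq_iff)
  then show ?thesis by simp
qed

lemma zar_closed_finite:
  fixes S :: "('a::idom \<times> 'a) set"
  shows "finite S \<Longrightarrow> zar_closed S"
proof (induction rule: finite_induct)
  case (insert z S)
  then show ?case using zar_closed_Un[OF zar_closed_singleton] by (metis insert_is_Un)
qed (rule zar_closed_empty)

lemma zar_closed_closure: "zar_closed (zar_closure S)"
  unfolding zar_closure_def by (rule zar_closed_Inter) auto

lemma zar_closure_subset: "S \<subseteq> zar_closure S"
  unfolding zar_closure_def by auto

lemma zar_closure_minimal: "zar_closed T \<Longrightarrow> S \<subseteq> T \<Longrightarrow> zar_closure S \<subseteq> T"
  unfolding zar_closure_def by auto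

lemma zar_irreducible_subset_Union:
  fixes F :: "('a::idom \<times> 'a) set set"
  assumes "zar_irreducible Z"
  shows "finite F \<Longrightarrow> (\<And>S. S \<in> F \<Longrightarrow> zar_closed S) \<Longrightarrow> Z \<subseteq> \<Union> F \<Longrightarrow> \<exists>S\<in>F. Z \<subseteq> S"
proof (induction rule: finite_induct)
  case empty
  then show ?case using assms by (simp add: zar_irreducible_def)
next
  case (insert S F)
  then have "zar_closed (\<Union> F)" by (intro zar_closed_Union) auto
  then have "Z \<subseteq> S \<or> Z \<subseteq> \<Union> F"
    using assms insert.prems unfolding zar_irreducible_def by auto
  then show ?case using insert.IH insert.prems by auto
qed

lemma curve_zar_irreducible:
  fixes h :: "'a::{alg_closed_field, field_char_0} poly poly"
  assumes irr: "irreducible h"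
  shows "zar_irreducible (zero_set {h})"
  unfolding zar_irreducible_def
proof (intro conjI allI impI)
  show "zero_set {h} \<noteq> {}" using irreducible_zero_set_infinite[OF irr] by auto
  fix Z1 Z2 assume Z: "zar_closed Z1 \<and> zar_closed Z2 \<and> zero_set {h} \<subseteq> Z1 \<union> Z2"
  show "zero_set {h} \<subseteq> Z1 \<or> zero_set {h} \<subseteq> Z2"
  proof (rule ccontr)
    assume "\<not> ?thesis"
    then have "finite (zero_set {h} \<inter> Z1 \<union> zero_set {h} \<inter> Z2)"
      using curve_subset_or_finite_inter[OF irr] Z by blast
    moreover have "zero_set {h} = zero_set {h} \<inter> Z1 \<union> zero_set {h} \<inter> Z2" using Z by blast
    ultimately show False using irreducible_zero_set_infinite[OF irr] by simp
  qed
qed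

lemma UNIV_zar_irreducible: "zar_irreducible (UNIV :: ('a::field_char_0 \<times> 'a) set)"
  unfolding zar_irreducible_def
proof (intro conjI allI impI)
  fix Z1 Z2 :: "('a \<times> 'a) set"
  assume Z: "zar_closed Z1 \<and> zar_closed Z2 \<and> UNIV \<subseteq> Z1 \<union> Z2"
  obtain P1 P2 where P: "Z1 = zero_set P1" "Z2 = zero_set P2"
    using Z by (auto simp: zar_closed_def)
  show "UNIV \<subseteq> Z1 \<or> UNIV \<subseteq> Z2"
  proof (rule ccontr)
    assume "\<not> ?thesis"
    then obtain z1 z2 where "z1 \<notin> Z1" "z2 \<notin> Z2" by auto
    then obtain g1 g2 where g: "g1 \<in> P1" "eval2 g1 z1 \<noteq> 0" "g2 \<in> P2" "eval2 g2 z2 \<noteq> 0"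
      using P by (auto simp: zero_set_def)
    have "eval2 (g1 * g2) z = 0" for z
      using Z g(1,3) P by (auto simp: zero_set_def)
    then have "g1 * g2 = 0" by (rule eval2_eq_zero_imp_zero)
    then show False using g(2,4) by auto
  qed
qed simp

lemma zero_set_eq_Union_irreducible:
  fixes g :: "'a::field poly poly"
  assumes "g \<noteq> 0"
  obtains H where "finite H" "\<forall>h\<in>H. irreducible h" "zero_set {g} = (\<Union>h\<in>H. zero_set {h})"
  using assms
proof (induction "degree g + degree (lead_coeff g)" arbitrary: g thesis rule: less_induct)
  case less
  have size_pos: "degree q + degree (lead_coeff q) > 0" if "q \<noteq> 0" "\<not> is_unit q" for q :: "'a poly poly"
  proof (rule ccontr)
    assume "\<not> ?thesis"
    then have deg: "degree q = 0" "degree (lead_coeff q) = 0" by auto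
    then have "q = [:lead_coeff q:]" by (metis degree_0_id)
    moreover have "is_unit (lead_coeff q)"
      using deg(2) that(1) by (simp add: is_unit_iff_degree)
    ultimately show False using that(2) by (metis is_unit_const_poly_iff)
  qed
  show ?case
  proof (cases "is_unit g")
    case True
    then have "zero_set {g} = {}"
      by (auto simp: zero_set_singleton is_unit_poly_iff)
    then show ?thesis by (intro less.prems(1)[of "{}"]) auto
  next
    case nonunit: False
    show ?thesis
    proof (cases "irreducible g")
      case True
      then show ?thesis by (intro less.prems(1)[of "{g}"]) auto
    next
      case False
      with nonunit less.prems(2) obtain a b where ab: "g = a * b" "\<not> is_unit a" "\<not> is_unit b"
        by (auto simp: irreducible_def)
      then have "a \<noteq> 0" "b \<noteq> 0" using less.prems(2) by auto
      then have "degree (lead_coeff g) = degree (lead_coeff a) + degree (lead_coeff b)"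
        "degree g = degree a + degree b"
        unfolding ab(1) lead_coeff_mult by (simp_all add: degree_mult_eq)
      then have size: "degree g + degree (lead_coeff g) =
          (degree a + degree (lead_coeff a)) + (degree b + degree (lead_coeff b))"
        by simp
      have "degree a + degree (lead_coeff a) < degree g + degree (lead_coeff g)"
        "degree b + degree (lead_coeff b) < degree g + degree (lead_coeff g)"
        using size size_pos[OF \<open>a \<noteq> 0\<close> ab(2)] size_pos[OF \<open>b \<noteq> 0\<close> ab(3)] by linarith+
      then obtain Ha Hb where
        Ha: "finite Ha" "\<forall>h\<in>Ha. irreducible h" "zero_set {a} = (\<Union>h\<in>Ha. zero_set {h})" and
        Hb: "finite Hb" "\<forall>h\<in>Hb. irreducible h" "zero_set {b} = (\<Union>h\<in>Hb. zero_set {h})"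
        using less.hyps \<open>a \<noteq> 0\<close> \<open>b \<noteq> 0\<close> by metis
      have "zero_set {g} = zero_set {a} \<union> zero_set {b}"
        by (auto simp: ab(1) zero_set_singleton)
      then show ?thesis using Ha Hb by (intro less.prems(1)[of "Ha \<union> Hb"]) auto
    qed
  qed
qed

lemma zar_closed_decomposition:
  fixes X :: "('a::alg_closed_field \<times> 'a) set"
  assumes closed: "zar_closed X" and proper: "X \<noteq> UNIV"
  obtains H F where "finite H" "finite F" "\<forall>h\<in>H. irreducible h \<and> zero_set {h} \<subseteq> X"
    "X = F \<union> (\<Union>h\<in>H. zero_set {h})"
proof -
  obtain P where P: "X = zero_set P" using closed by (auto simp: zar_closed_def)
  obtain g where g: "g \<in> P" "g \<noteq> 0"
    using proper unfolding P zero_set_def by fastforce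
  obtain G where G: "finite G" "\<forall>h\<in>G. irreducible h" "zero_set {g} = (\<Union>h\<in>G. zero_set {h})"
    using zero_set_eq_Union_irreducible[OF g(2)] by blast
  define H where "H = {h \<in> G. zero_set {h} \<subseteq> X}"
  define F where "F = X - (\<Union>h\<in>H. zero_set {h})"
  have "X \<subseteq> zero_set {g}" using g(1) by (auto simp: P zero_set_def)
  have "F \<subseteq> (\<Union>h\<in>G - H. zero_set {h} \<inter> X)"
  proof
    fix z assume z: "z \<in> F"
    then have "z \<in> X" "\<forall>h\<in>H. z \<notin> zero_set {h}" by (auto simp: F_def)
    moreover obtain h where "h \<in> G" "z \<in> zero_set {h}"
      using \<open>z \<in> X\<close> \<open>X \<subseteq> zero_set {g}\<close> G(3) by blast
    ultimately show "z \<in> (\<Union>h\<in>G - H. zero_set {h} \<inter> X)" by blast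
  qed
  moreover have "finite (zero_set {h} \<inter> X)" if "h \<in> G - H" for h
    using that curve_subset_or_finite_inter[OF _ closed] G(2) by (auto simp: H_def)
  ultimately have "finite F" using G(1) by (meson finite_Diff finite_UN_I finite_subset)
  then show thesis using G(1,2) by (intro that[of H F]) (auto simp: H_def F_def)
qed

text \<open>The remaining components and the finitely many isolated points of \<open>X\<close> outside \<open>Z\<close> form a
  closed set that misses part of \<open>Z\<close>.\<close>

lemma irred_component_not_subset_closure_Diff:
  fixes X Z :: "('a::{alg_closed_field, field_char_0} \<times> 'a) set"
  assumes closed: "zar_closed X" and comp: "irred_component X Z"
  shows "\<not> Z \<subseteq> zar_closure (X - Z)"
proof -
  have Z_irr: "zar_irreducible Z"
    and maximal: "\<And>Z'. Z \<subseteq> Z' \<Longrightarrow> Z' \<subseteq> X \<Longrightarrow> zar_closed Z' \<Longrightarrow> zar_irreducible Z' \<Longrightarrow> Z' = Z"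
    using comp unfolding irred_component_def by blast+
  have "Z \<noteq> {}" using Z_irr by (simp add: zar_irreducible_def)
  have "\<exists>W. zar_closed W \<and> X - Z \<subseteq> W \<and> \<not> Z \<subseteq> W"
  proof (cases "X = UNIV")
    case True
    then have "Z = UNIV"
      using maximal[of UNIV] UNIV_zar_irreducible zar_closed_UNIV by auto
    then show ?thesis using \<open>Z \<noteq> {}\<close> True zar_closed_empty by blast
  next
    case False
    then obtain H F where H: "finite H" "finite F" "\<forall>h\<in>H. irreducible h \<and> zero_set {h} \<subseteq> X"
      and X: "X = F \<union> (\<Union>h\<in>H. zero_set {h})"
      using zar_closed_decomposition[OF closed] by blast
    define \<F> where "\<F> = insert (F - Z) ((\<lambda>h. zero_set {h}) ` {h \<in> H. zero_set {h} \<noteq> Z})"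
    have "finite \<F>" using H(1) by (simp add: \<F>_def)
    moreover have closed_\<F>: "\<And>S. S \<in> \<F> \<Longrightarrow> zar_closed S"
      using H(2) zar_closed_finite by (auto simp: \<F>_def)
    ultimately have "zar_closed (\<Union>\<F>)" by (rule zar_closed_Union)
    moreover have "X - Z \<subseteq> \<Union>\<F>" using X by (auto simp: \<F>_def)
    moreover have "\<not> Z \<subseteq> \<Union>\<F>"
    proof
      assume "Z \<subseteq> \<Union>\<F>"
      then obtain S where "S \<in> \<F>" "Z \<subseteq> S"
        using zar_irreducible_subset_Union[OF Z_irr \<open>finite \<F>\<close> closed_\<F>] by blast
      then obtain h where "h \<in> H" "zero_set {h} \<noteq> Z" "Z \<subseteq> zero_set {h}"
        using \<open>Z \<noteq> {}\<close> by (auto simp: \<F>_def)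
      then show False
        using maximal[of "zero_set {h}"] H(3) curve_zar_irreducible by auto
    qed
    ultimately show ?thesis by blast
  qed
  then show ?thesis using zar_closure_minimal by blast
qed

section \<open>Polynomial functions\<close>

text \<open>Over \<open>plane_coords\<close> these are exactly the
  functions \<open>eval2 H\<close>, but composition and substitution are easier by induction on the expression.\<close>

inductive_set polyfun :: "('b \<Rightarrow> 'a::comm_ring_1) set \<Rightarrow> ('b \<Rightarrow> 'a) set" for G where
  polyfun_const: "(\<lambda>_. c) \<in> polyfun G"
| polyfun_gen: "g \<in> G \<Longrightarrow> g \<in> polyfun G"
| polyfun_add: "p \<in> polyfun G \<Longrightarrow> q \<in> polyfun G \<Longrightarrow> (\<lambda>z. p z + q z) \<in> polyfun G"
| polyfun_mult: "p \<in> polyfun G \<Longrightarrow> q \<in> polyfun G \<Longrightarrow> (\<lambda>z. p z * q z) \<in> polyfun G"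

lemma polyfun_diff: "p \<in> polyfun G \<Longrightarrow> q \<in> polyfun G \<Longrightarrow> (\<lambda>z. p z - q z) \<in> polyfun G"
  using polyfun_add[OF _ polyfun_mult[OF polyfun_const[of "-1"]], of p G q] by simp

lemma polyfun_power: "p \<in> polyfun G \<Longrightarrow> (\<lambda>z. p z ^ n) \<in> polyfun G"
  by (induction n) (auto intro: polyfun_mult polyfun_const[of 1, simplified])

abbreviation plane_coords :: "('a \<times> 'a \<Rightarrow> 'a) set" where
  "plane_coords \<equiv> {fst, snd}"

definition adjoin_var :: "('b \<Rightarrow> 'a) set \<Rightarrow> ('b \<times> 'a \<Rightarrow> 'a) set" where
  "adjoin_var G = insert snd ((\<lambda>g. g \<circ> fst) ` G)"

lemma polyfun_plane_coords_eq_eval2: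
  fixes p :: "'a::comm_ring_1 \<times> 'a \<Rightarrow> 'a"
  assumes "p \<in> polyfun plane_coords"
  obtains H where "p = eval2 H"
  using assms
proof (induction arbitrary: thesis rule: polyfun.induct)
  case (polyfun_const c)
  show ?case by (rule polyfun_const.prems[of "[:[:c:]:]"]) (simp add: fun_eq_iff)
next
  case (polyfun_gen g)
  then consider "g = fst" | "g = snd" by blast
  then show ?case
  proof cases
    case 1
    then show ?thesis by (intro polyfun_gen.prems[of "[:[:0, 1:]:]"]) (simp add: fun_eq_iff)
  next
    case 2
    then show ?thesis by (intro polyfun_gen.prems[of "[:0, 1:]"]) (simp add: fun_eq_iff)
  qed
next
  case (polyfun_add p q)
  obtain H1 H2 where "p = eval2 H1" "q = eval2 H2" using polyfun_add.IH by metis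
  then show ?case by (intro polyfun_add.prems[of "H1 + H2"]) (simp add: fun_eq_iff)
next
  case (polyfun_mult p q)
  obtain H1 H2 where "p = eval2 H1" "q = eval2 H2" using polyfun_mult.IH by metis
  then show ?case by (intro polyfun_mult.prems[of "H1 * H2"]) (simp add: fun_eq_iff)
qed

lemma eval2_in_polyfun: "eval2 H \<in> polyfun plane_coords"
proof (induction H)
  case 0
  then show ?case using polyfun_const[of 0] by (simp add: fun_eq_iff)
next
  case (pCons c H)
  have "(\<lambda>z. poly c (fst z)) \<in> polyfun plane_coords"
  proof (induction c)
    case 0
    then show ?case using polyfun_const[of 0] by simp
  next
    case (pCons a c)
    have "(\<lambda>z. (\<lambda>_. a) z + fst z * poly c (fst z)) \<in> polyfun plane_coords"
      by (intro polyfun_add polyfun_mult polyfun_const polyfun_gen pCons.IH) simp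
    then show ?case by simp
  qed
  then have "(\<lambda>z. poly c (fst z) + snd z * eval2 H z) \<in> polyfun plane_coords"
    by (rule polyfun_add[OF _ polyfun_mult[OF polyfun_gen pCons.IH]]) simp
  then show ?case by (simp add: fun_eq_iff)
qed

lemma polyfun_compose:
  assumes "p \<in> polyfun plane_coords" "\<phi>1 \<in> polyfun G" "\<phi>2 \<in> polyfun G"
  shows "(\<lambda>z. p (\<phi>1 z, \<phi>2 z)) \<in> polyfun G"
  using assms(1)
  by (induction rule: polyfun.induct) (use assms(2,3) in \<open>auto intro: polyfun.intros\<close>)

lemma polyfun_even_odd_split:
  fixes P :: "'b \<times> 'a::comm_ring_1 \<Rightarrow> 'a"
  assumes "P \<in> polyfun (adjoin_var G)"
  shows "\<exists>Q0 Q1. Q0 \<in> polyfun (adjoin_var G) \<and> Q1 \<in> polyfun (adjoin_var G) \<and>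
           (\<forall>y t. P (y, t) = Q0 (y, t^2) + t * Q1 (y, t^2))"
  using assms
proof (induction rule: polyfun.induct)
  case (polyfun_const c)
  show ?case
    by (rule exI[of _ "\<lambda>_. c"], rule exI[of _ "\<lambda>_. 0"]) (simp add: polyfun.polyfun_const)
next
  case (polyfun_gen g)
  then consider "g = snd" | h where "g = h \<circ> fst" "h \<in> G" by (auto simp: adjoin_var_def)
  then show ?case
  proof cases
    case 1
    show ?thesis
      by (rule exI[of _ "\<lambda>_. 0"], rule exI[of _ "\<lambda>_. 1"]) (simp add: 1 polyfun.polyfun_const)
  next
    case 2
    have "g \<in> polyfun (adjoin_var G)" by (rule polyfun.polyfun_gen[OF polyfun_gen.hyps])
    moreover have "\<forall>y t. g (y, t) = g (y, t^2)" by (simp add: 2)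
    ultimately show ?thesis
      by (intro exI[of _ g] exI[of _ "\<lambda>_. 0"]) (simp add: polyfun.polyfun_const)
  qed
next
  case (polyfun_add p q)
  then obtain A0 A1 B0 B1 where AB: "A0 \<in> polyfun (adjoin_var G)" "A1 \<in> polyfun (adjoin_var G)"
    "B0 \<in> polyfun (adjoin_var G)" "B1 \<in> polyfun (adjoin_var G)"
    "\<forall>y t. p (y, t) = A0 (y, t^2) + t * A1 (y, t^2)" "\<forall>y t. q (y, t) = B0 (y, t^2) + t * B1 (y, t^2)"
    by blast
  show ?case
    by (rule exI[of _ "\<lambda>z. A0 z + B0 z"], rule exI[of _ "\<lambda>z. A1 z + B1 z"])
       (use AB in \<open>simp add: polyfun.polyfun_add algebra_simps\<close>)
next
  case (polyfun_mult p q)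
  then obtain A0 A1 B0 B1 where AB: "A0 \<in> polyfun (adjoin_var G)" "A1 \<in> polyfun (adjoin_var G)"
    "B0 \<in> polyfun (adjoin_var G)" "B1 \<in> polyfun (adjoin_var G)"
    "\<forall>y t. p (y, t) = A0 (y, t^2) + t * A1 (y, t^2)" "\<forall>y t. q (y, t) = B0 (y, t^2) + t * B1 (y, t^2)"
    by blast
  have "snd \<in> polyfun (adjoin_var G)" by (rule polyfun.polyfun_gen) (simp add: adjoin_var_def)
  show ?case
    by (rule exI[of _ "\<lambda>z. A0 z * B0 z + snd z * (A1 z * B1 z)"],
        rule exI[of _ "\<lambda>z. A0 z * B1 z + A1 z * B0 z"])
       (use AB \<open>snd \<in> polyfun (adjoin_var G)\<close> in
         \<open>simp add: polyfun.polyfun_add polyfun.polyfun_mult algebra_simps power2_eq_square\<close>)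
qed

lemma polyfun_subst_clear_denominator:
  fixes N :: "'b \<Rightarrow> 'a::field"
  assumes N: "N \<in> polyfun G"
  shows "Q \<in> polyfun (adjoin_var G) \<Longrightarrow>
    \<exists>k R. R \<in> polyfun G \<and> (\<forall>y. N y \<noteq> 0 \<longrightarrow> N y ^ k * Q (y, D / N y) = R y)"
proof (induction rule: polyfun.induct)
  case (polyfun_const c)
  show ?case by (intro exI[of _ 0] exI[of _ "\<lambda>_. c"]) (auto intro: polyfun.polyfun_const)
next
  case (polyfun_gen g)
  then consider "g = snd" | h where "g = h \<circ> fst" "h \<in> G" by (auto simp: adjoin_var_def)
  then show ?case
  proof cases
    case 1
    then show ?thesis by (intro exI[of _ 1] exI[of _ "\<lambda>_. D"]) (auto intro: polyfun.polyfun_const)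
  next
    case 2
    then show ?thesis by (intro exI[of _ 0] exI[of _ h]) (auto intro: polyfun.polyfun_gen)
  qed
next
  case (polyfun_add p q)
  then obtain ka Ra kb Rb where R: "Ra \<in> polyfun G" "Rb \<in> polyfun G"
    "\<forall>y. N y \<noteq> 0 \<longrightarrow> N y ^ ka * p (y, D / N y) = Ra y"
    "\<forall>y. N y \<noteq> 0 \<longrightarrow> N y ^ kb * q (y, D / N y) = Rb y"
    by blast
  have "(\<lambda>y. N y ^ kb * Ra y + N y ^ ka * Rb y) \<in> polyfun G"
    using R N by (intro polyfun.polyfun_add polyfun.polyfun_mult polyfun_power) auto
  moreover have "N y ^ (ka + kb) * (p (y, D / N y) + q (y, D / N y)) = N y ^ kb * Ra y + N y ^ ka * Rb y"
    if "N y \<noteq> 0" for y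
  proof -
    have "N y ^ (ka + kb) * (p (y, D / N y) + q (y, D / N y)) =
        N y ^ kb * (N y ^ ka * p (y, D / N y)) + N y ^ ka * (N y ^ kb * q (y, D / N y))"
      by (simp add: power_add algebra_simps)
    then show ?thesis using R(3,4) that by simp
  qed
  ultimately show ?case by blast
next
  case (polyfun_mult p q)
  then obtain ka Ra kb Rb where R: "Ra \<in> polyfun G" "Rb \<in> polyfun G"
    "\<forall>y. N y \<noteq> 0 \<longrightarrow> N y ^ ka * p (y, D / N y) = Ra y"
    "\<forall>y. N y \<noteq> 0 \<longrightarrow> N y ^ kb * q (y, D / N y) = Rb y"
    by blast
  have "(\<lambda>y. Ra y * Rb y) \<in> polyfun G"
    using R by (intro polyfun.polyfun_mult) auto
  moreover have "N y ^ (ka + kb) * (p (y, D / N y) * q (y, D / N y)) = Ra y * Rb y"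
    if "N y \<noteq> 0" for y
  proof -
    have "N y ^ (ka + kb) * (p (y, D / N y) * q (y, D / N y)) =
        (N y ^ ka * p (y, D / N y)) * (N y ^ kb * q (y, D / N y))"
      by (simp add: power_add algebra_simps)
    then show ?thesis using R(3,4) that by simp
  qed
  ultimately show ?case by blast
qed

section \<open>The conchoid\<close>

definition sq_dist :: "'a::comm_ring_1 \<Rightarrow> 'a \<Rightarrow> 'a \<times> 'a \<Rightarrow> 'a" where
  "sq_dist a b y = (fst y - a)^2 + (snd y - b)^2"

definition conch_point :: "'a::comm_ring_1 \<Rightarrow> 'a \<Rightarrow> 'a \<times> 'a \<Rightarrow> 'a \<Rightarrow> 'a \<times> 'a" where
  "conch_point a b y t = (fst y + t * (fst y - a), snd y + t * (snd y - b))"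

lemma sq_dist_in_polyfun: "sq_dist a b \<in> polyfun plane_coords"
proof -
  have "(\<lambda>z. (fst z - a)^2 + (snd z - b)^2) \<in> polyfun plane_coords"
    by (intro polyfun_add polyfun_power polyfun_diff polyfun_const polyfun_gen) auto
  then show ?thesis by (simp add: sq_dist_def[abs_def])
qed

text \<open>Collinearity of \<open>x\<close>, \<open>y\<close> and \<open>A \<noteq> y\<close> means \<open>x - y = t (y - A)\<close>, and the distance condition
  becomes \<open>t\<^sup>2 |y - A|\<^sup>2 = d\<^sup>2\<close>.\<close>

lemma conchB_iff:
  fixes f :: "'a::field poly poly"
  shows "((x1, x2), y, w) \<in> conchB f a b d \<longleftrightarrow>
    eval2 f y = 0 \<and> sq_dist a b y \<noteq> 0 \<and> w = 1 / sq_dist a b y \<and>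
    (\<exists>t. t^2 * sq_dist a b y = d^2 \<and> (x1, x2) = conch_point a b y t)"
proof -
  obtain y1 y2 where y: "y = (y1, y2)" by fastforce
  have "(x1 - y1)^2 + (x2 - y2)^2 = d^2 \<and> (y2 - b) * (x1 - y1) - (y1 - a) * (x2 - y2) = 0 \<longleftrightarrow>
      (\<exists>t. t^2 * sq_dist a b y = d^2 \<and> (x1, x2) = conch_point a b y t)"
    if N: "sq_dist a b y \<noteq> 0"
  proof
    assume "(x1 - y1)^2 + (x2 - y2)^2 = d^2 \<and> (y2 - b) * (x1 - y1) - (y1 - a) * (x2 - y2) = 0"
    then have dist: "(x1 - y1)^2 + (x2 - y2)^2 = d^2"
      and col: "(y2 - b) * (x1 - y1) = (y1 - a) * (x2 - y2)" by auto
    obtain t where t: "x1 - y1 = t * (y1 - a)" "x2 - y2 = t * (y2 - b)"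
    proof (cases "y1 = a")
      case True
      then have "y2 \<noteq> b" "x1 = y1" using N col by (auto simp: y sq_dist_def)
      then show ?thesis using True by (intro that[of "(x2 - y2) / (y2 - b)"]) simp_all
    next
      case False
      then show ?thesis using col by (intro that[of "(x1 - y1) / (y1 - a)"]) (simp_all add: field_simps)
    qed
    have "t^2 * sq_dist a b y = (t * (y1 - a))^2 + (t * (y2 - b))^2"
      by (simp add: y sq_dist_def power_mult_distrib distrib_left)
    then show "\<exists>t. t^2 * sq_dist a b y = d^2 \<and> (x1, x2) = conch_point a b y t"
      using dist t by (intro exI[of _ t]) (simp add: y conch_point_def algebra_simps)
  next
    assume "\<exists>t. t^2 * sq_dist a b y = d^2 \<and> (x1, x2) = conch_point a b y t"
    then obtain t where d: "t^2 * sq_dist a b y = d^2"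
      and t: "x1 - y1 = t * (y1 - a)" "x2 - y2 = t * (y2 - b)"
      by (auto simp: y conch_point_def)
    have "(t * (y1 - a))^2 + (t * (y2 - b))^2 = d^2"
      using d by (simp add: y sq_dist_def power_mult_distrib distrib_left)
    then show "(x1 - y1)^2 + (x2 - y2)^2 = d^2 \<and> (y2 - b) * (x1 - y1) - (y1 - a) * (x2 - y2) = 0"
      unfolding t by (simp add: algebra_simps)
  qed
  moreover have "w * sq_dist a b y = 1 \<longleftrightarrow> sq_dist a b y \<noteq> 0 \<and> w = 1 / sq_dist a b y"
    by (metis divide_eq_eq mult_zero_right zero_neq_one)
  ultimately show ?thesis
    unfolding conchB_def y by (auto simp: sq_dist_def)
qed

lemma conchB_memI:
  fixes f :: "'a::field poly poly"
  assumes "eval2 f y = 0" "sq_dist a b y \<noteq> 0" "t^2 * sq_dist a b y = d^2"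
  shows "(conch_point a b y t, y, 1 / sq_dist a b y) \<in> conchB f a b d"
  using assms by (cases "conch_point a b y t") (auto simp: conchB_iff)

lemma conchB_memE:
  fixes f :: "'a::field poly poly"
  assumes "e \<in> conchB f a b d"
  obtains t where "eval2 f (pi2 e) = 0" "sq_dist a b (pi2 e) \<noteq> 0" "t^2 * sq_dist a b (pi2 e) = d^2"
    "pi1 e = conch_point a b (pi2 e) t"
  using assms by (cases e) (auto simp: conchB_iff pi1_def pi2_def)

text \<open>Over \<open>y\<close> the conchoid has the two points \<open>t = \<plusminus>\<surd>(d\<^sup>2 / |y - A|\<^sup>2)\<close>; writing
  \<open>F(conch_point y t) = Q\<^sub>0(y, t\<^sup>2) + t Q\<^sub>1(y, t\<^sup>2)\<close>, the polynomial \<open>F\<close> vanishes at both exactly when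
  \<open>Q\<^sub>0\<close> and \<open>Q\<^sub>1\<close> vanish at \<open>(y, d\<^sup>2 / |y - A|\<^sup>2)\<close>, which after clearing denominators is a polynomial
  condition on \<open>y\<close>.\<close>

lemma conch_fibre_vanishing_polynomial:
  fixes F :: "'a::{alg_closed_field, field_char_0} \<times> 'a \<Rightarrow> 'a"
  assumes F: "F \<in> polyfun plane_coords" and d: "d \<noteq> 0"
  obtains H0 H1 where "\<And>y. sq_dist a b y \<noteq> 0 \<Longrightarrow>
    (\<forall>t. t^2 * sq_dist a b y = d^2 \<longrightarrow> F (conch_point a b y t) = 0) \<longleftrightarrow>
    eval2 H0 y = 0 \<and> eval2 H1 y = 0"
proof -
  let ?N = "sq_dist a b"
  have "(\<lambda>z. fst (fst z) + snd z * (fst (fst z) - a)) \<in> polyfun (adjoin_var plane_coords)"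
    "(\<lambda>z. snd (fst z) + snd z * (snd (fst z) - b)) \<in> polyfun (adjoin_var plane_coords)"
    by (intro polyfun_add polyfun_mult polyfun_diff polyfun_const polyfun_gen;
        force simp: adjoin_var_def)+
  then have "(\<lambda>z. F (conch_point a b (fst z) (snd z))) \<in> polyfun (adjoin_var plane_coords)"
    using polyfun_compose[OF F] by (simp add: conch_point_def)
  then obtain Q0 Q1 where Q: "Q0 \<in> polyfun (adjoin_var plane_coords)" "Q1 \<in> polyfun (adjoin_var plane_coords)"
    "\<And>y t. F (conch_point a b y t) = Q0 (y, t^2) + t * Q1 (y, t^2)"
    using polyfun_even_odd_split by fastforce
  obtain k0 R0 k1 R1 where R: "R0 \<in> polyfun plane_coords" "R1 \<in> polyfun plane_coords"
    "\<And>y. ?N y \<noteq> 0 \<Longrightarrow> ?N y ^ k0 * Q0 (y, d^2 / ?N y) = R0 y"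
    "\<And>y. ?N y \<noteq> 0 \<Longrightarrow> ?N y ^ k1 * Q1 (y, d^2 / ?N y) = R1 y"
    using polyfun_subst_clear_denominator[OF sq_dist_in_polyfun, where D = "d^2"] Q(1,2) by metis
  obtain H0 H1 where H: "R0 = eval2 H0" "R1 = eval2 H1"
    using polyfun_plane_coords_eq_eval2 R(1,2) by metis
  show thesis
  proof (rule that)
    fix y assume N: "?N y \<noteq> 0"
    define s where "s = d^2 / ?N y"
    have roots: "t^2 * ?N y = d^2 \<longleftrightarrow> t^2 = s" for t
      using N by (auto simp: s_def field_simps)
    obtain t where t: "t^2 = s" using nth_root_exists[of 2 s] by auto
    have "t \<noteq> 0" using t d N by (auto simp: s_def)
    have "(\<forall>t. t^2 = s \<longrightarrow> Q0 (y, t^2) + t * Q1 (y, t^2) = 0) \<longleftrightarrow> Q0 (y, s) = 0 \<and> Q1 (y, s) = 0"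
    proof
      assume all: "\<forall>t. t^2 = s \<longrightarrow> Q0 (y, t^2) + t * Q1 (y, t^2) = 0"
      have plus: "Q0 (y, s) + t * Q1 (y, s) = 0" using all[rule_format, of t] t by simp
      have minus: "Q0 (y, s) - t * Q1 (y, s) = 0" using all[rule_format, of "-t"] t by simp
      have "2 * Q0 (y, s) = 0" using arg_cong2[OF plus minus, of "(+)"] by simp
      then have "Q0 (y, s) = 0" by simp
      then show "Q0 (y, s) = 0 \<and> Q1 (y, s) = 0" using plus \<open>t \<noteq> 0\<close> by simp
    qed auto
    moreover have "Q0 (y, s) = 0 \<longleftrightarrow> eval2 H0 y = 0" "Q1 (y, s) = 0 \<longleftrightarrow> eval2 H1 y = 0"
      using R(3,4)[OF N] N by (auto simp: s_def H)
    ultimately show "(\<forall>t. t^2 * ?N y = d^2 \<longrightarrow> F (conch_point a b y t) = 0) \<longleftrightarrow>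
        eval2 H0 y = 0 \<and> eval2 H1 y = 0"
      by (simp add: roots Q(3))
  qed
qed

lemma pi1_conchB_subset_closed:
  fixes f :: "'a::{alg_closed_field, field_char_0} poly poly"
  assumes irr: "irreducible f" and d: "d \<noteq> 0" and T: "zar_closed T"
    and U: "U \<subseteq> zero_set {f}" "infinite U" "\<And>y. y \<in> U \<Longrightarrow> sq_dist a b y \<noteq> 0"
    and fibres: "\<And>y t. y \<in> U \<Longrightarrow> t^2 * sq_dist a b y = d^2 \<Longrightarrow> conch_point a b y t \<in> T"
  shows "pi1 ` conchB f a b d \<subseteq> T"
proof
  fix x assume "x \<in> pi1 ` conchB f a b d"
  then obtain e t where e: "x = pi1 e" "eval2 f (pi2 e) = 0" "sq_dist a b (pi2 e) \<noteq> 0"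
    "t^2 * sq_dist a b (pi2 e) = d^2" "pi1 e = conch_point a b (pi2 e) t"
    by (auto elim: conchB_memE)
  obtain P where P: "T = zero_set P" using T by (auto simp: zar_closed_def)
  have "eval2 g x = 0" if "g \<in> P" for g
  proof -
    obtain H0 H1 where H: "\<And>y. sq_dist a b y \<noteq> 0 \<Longrightarrow>
        (\<forall>t. t^2 * sq_dist a b y = d^2 \<longrightarrow> eval2 g (conch_point a b y t) = 0) \<longleftrightarrow>
        eval2 H0 y = 0 \<and> eval2 H1 y = 0"
      using conch_fibre_vanishing_polynomial[OF eval2_in_polyfun d] by blast
    have U_sub: "U \<subseteq> zero_set {f} \<inter> zero_set {H0} \<inter> zero_set {H1}"
    proof
      fix y assume y: "y \<in> U"
      have "\<forall>t. t^2 * sq_dist a b y = d^2 \<longrightarrow> eval2 g (conch_point a b y t) = 0"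
        using fibres[OF y] \<open>g \<in> P\<close> by (auto simp: P zero_set_def)
      then show "y \<in> zero_set {f} \<inter> zero_set {H0} \<inter> zero_set {H1}"
        using H[OF U(3)[OF y]] U(1) y by (auto simp: zero_set_singleton)
    qed
    have "infinite (zero_set {f} \<inter> zero_set {H0})" "infinite (zero_set {f} \<inter> zero_set {H1})"
      by (rule infinite_super[OF _ U(2)], use U_sub in blast)+
    then have "zero_set {f} \<subseteq> zero_set {H0}" "zero_set {f} \<subseteq> zero_set {H1}"
      using curve_subset_or_finite_inter[OF irr zar_closed_zero_set] by blast+
    then have "eval2 H0 (pi2 e) = 0 \<and> eval2 H1 (pi2 e) = 0"
      using e(2) by (auto simp: zero_set_singleton)
    then show ?thesis using H[OF e(3)] e(1,4,5) by simp
  qed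
  then show "x \<in> T" by (simp add: P zero_set_def)
qed

lemma curve_open_subset_cofinite:
  fixes f :: "'a::alg_closed_field poly poly"
  assumes irr: "irreducible f" and "zar_open_in (zero_set {f}) \<Omega>" "\<Omega> \<noteq> {}"
  shows "finite (zero_set {f} - \<Omega>)"
proof -
  obtain T where T: "zar_closed T" "\<Omega> = zero_set {f} - T"
    using assms(2) by (auto simp: zar_open_in_def)
  then have "finite (zero_set {f} \<inter> T)"
    using curve_subset_or_finite_inter[OF irr T(1)] assms(3) by auto
  then show ?thesis by (simp add: T(2) Diff_Diff_Int)
qed

lemma conchoid_dense_in_pi1_over_open:
  fixes f :: "'a::{alg_closed_field, field_char_0} poly poly"
  assumes irr: "irreducible f" and d: "d \<noteq> 0"
    and C0: "{p \<in> zero_set {f}. sq_dist a b p \<noteq> 0} \<noteq> {}"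
    and \<Omega>: "\<Omega> \<noteq> {}" "zar_open_in (zero_set {f}) \<Omega>"
  shows "pi1 ` (conchB f a b d \<inter> pi2 -` \<Omega>) \<noteq> {} \<and>
         zar_dense_in (conchoid f a b d) (pi1 ` (conchB f a b d \<inter> pi2 -` \<Omega>))"
proof -
  let ?C = "zero_set {f}" and ?B = "conchB f a b d"
  define S where "S = pi1 ` (?B \<inter> pi2 -` \<Omega>)"
  define U where "U = {y \<in> \<Omega>. sq_dist a b y \<noteq> 0}"
  obtain N where N: "sq_dist a b = eval2 N"
    using polyfun_plane_coords_eq_eval2[OF sq_dist_in_polyfun] by metis
  have "{p \<in> ?C. sq_dist a b p \<noteq> 0} = ?C - zero_set {N}"
    by (auto simp: N zero_set_singleton)
  then have "zar_open_in ?C {p \<in> ?C. sq_dist a b p \<noteq> 0}"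
    unfolding zar_open_in_def using zar_closed_zero_set by blast
  then have "finite (?C - {p \<in> ?C. sq_dist a b p \<noteq> 0})"
    using curve_open_subset_cofinite[OF irr _ C0] by blast
  moreover have "finite (?C - \<Omega>)" using curve_open_subset_cofinite[OF irr \<Omega>(2,1)] .
  moreover have "U = ?C - (?C - \<Omega>) - (?C - {p \<in> ?C. sq_dist a b p \<noteq> 0})"
    using \<Omega>(2) by (auto simp: U_def zar_open_in_def)
  ultimately have "infinite U"
    using irreducible_zero_set_infinite[OF irr] by (simp add: Diff_infinite_finite)
  have "U \<subseteq> ?C" using \<Omega>(2) by (auto simp: U_def zar_open_in_def)
  have fibres: "conch_point a b y t \<in> S" if "y \<in> U" "t^2 * sq_dist a b y = d^2" for y t
  proof -
    have "(conch_point a b y t, y, 1 / sq_dist a b y) \<in> ?B"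
      using that \<open>U \<subseteq> ?C\<close> by (intro conchB_memI) (auto simp: U_def zero_set_singleton)
    then show ?thesis using that(1) by (force simp: S_def U_def pi1_def pi2_def)
  qed
  have "U \<noteq> {}" using \<open>infinite U\<close> by auto
  then obtain y where "y \<in> U" by blast
  moreover obtain t where "t^2 = d^2 / sq_dist a b y"
    using nth_root_exists[of 2 "d^2 / sq_dist a b y"] by auto
  ultimately have "S \<noteq> {}" using fibres[of y t] by (auto simp: U_def)
  moreover have B_sub: "pi1 ` ?B \<subseteq> zar_closure S"
  proof (rule pi1_conchB_subset_closed[OF irr d zar_closed_closure \<open>U \<subseteq> ?C\<close> \<open>infinite U\<close>])
    show "sq_dist a b y \<noteq> 0" if "y \<in> U" for y using that by (simp add: U_def)
    show "conch_point a b y t \<in> zar_closure S" if "y \<in> U" "t^2 * sq_dist a b y = d^2" for y t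
      using fibres[OF that] zar_closure_subset by blast
  qed
  have "zar_dense_in (conchoid f a b d) S"
    unfolding zar_dense_in_def conchoid_def
  proof (intro conjI)
    have "S \<subseteq> pi1 ` ?B" by (auto simp: S_def)
    then show "S \<subseteq> zar_closure (pi1 ` ?B)" using zar_closure_subset by blast
  qed (rule zar_closure_minimal[OF zar_closed_closure B_sub])
  ultimately show ?thesis by (simp add: S_def)
qed

lemma curve_dense_in_pi2_over_component:
  fixes f :: "'a::{alg_closed_field, field_char_0} poly poly"
  assumes irr: "irreducible f" and d: "d \<noteq> 0"
    and C0: "{p \<in> zero_set {f}. sq_dist a b p \<noteq> 0} \<noteq> {}"
    and comp: "irred_component (conchoid f a b d) Z"
    and \<Omega>: "\<Omega> \<noteq> {}" "zar_open_in Z \<Omega>"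
  shows "pi2 ` (conchB f a b d \<inter> pi1 -` \<Omega>) \<noteq> {} \<and>
         zar_dense_in (zero_set {f}) (pi2 ` (conchB f a b d \<inter> pi1 -` \<Omega>))"
proof -
  let ?C = "zero_set {f}" and ?B = "conchB f a b d" and ?X = "conchoid f a b d"
  define Y where "Y = pi2 ` (?B \<inter> pi1 -` \<Omega>)"
  obtain T where T: "zar_closed T" "\<Omega> = Z - T" using \<Omega>(2) by (auto simp: zar_open_in_def)
  have "Z \<subseteq> ?X" "zar_irreducible Z" "zar_closed Z"
    using comp by (auto simp: irred_component_def)
  have "Y \<subseteq> ?C"
  proof
    fix y assume "y \<in> Y"
    then obtain e where "e \<in> ?B" "y = pi2 e" unfolding Y_def by blast
    then show "y \<in> ?C" by (auto simp: zero_set_singleton elim: conchB_memE)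
  qed
  have "infinite Y"
  proof
    assume "finite Y"
    then have "infinite (?C - Y)" by (rule Diff_infinite_finite) (rule irreducible_zero_set_infinite[OF irr])
    then have "?C - Y \<noteq> {}" by (metis finite.emptyI)
    moreover have "zar_open_in ?C (?C - Y)"
      unfolding zar_open_in_def using zar_closed_finite[OF \<open>finite Y\<close>] by blast
    ultimately have dense: "zar_dense_in ?X (pi1 ` (?B \<inter> pi2 -` (?C - Y)))" (is "zar_dense_in _ ?S")
      by (rule conjunct2[OF conchoid_dense_in_pi1_over_open[OF irr d C0]])
    have "?S \<inter> \<Omega> = {}" unfolding Y_def by blast
    then have "?S \<subseteq> (?X - Z) \<union> (Z \<inter> T)"
      using dense T(2) unfolding zar_dense_in_def by blast
    then have "zar_closure ?S \<subseteq> zar_closure (?X - Z) \<union> (Z \<inter> T)"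
      using zar_closure_subset[of "?X - Z"]
      by (intro zar_closure_minimal zar_closed_Un zar_closed_closure zar_closed_Int \<open>zar_closed Z\<close> T(1))
        blast
    then have "Z \<subseteq> zar_closure (?X - Z) \<union> (Z \<inter> T)"
      using dense \<open>Z \<subseteq> ?X\<close> unfolding zar_dense_in_def by blast
    then have "Z \<subseteq> zar_closure (?X - Z) \<or> Z \<subseteq> Z \<inter> T"
      using \<open>zar_irreducible Z\<close> zar_closed_closure zar_closed_Int[OF \<open>zar_closed Z\<close> T(1)]
      unfolding zar_irreducible_def by blast
    moreover have "zar_closed ?X" by (simp add: conchoid_def zar_closed_closure)
    then have "\<not> Z \<subseteq> zar_closure (?X - Z)"
      using irred_component_not_subset_closure_Diff[OF _ comp] by blast
    ultimately show False using \<Omega>(1) T(2) by blast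
  qed
  have "Y \<subseteq> ?C \<inter> zar_closure Y" using \<open>Y \<subseteq> ?C\<close> zar_closure_subset by blast
  then have "infinite (?C \<inter> zar_closure Y)" using \<open>infinite Y\<close> by (rule infinite_super)
  then have "?C \<subseteq> zar_closure Y"
    using curve_subset_or_finite_inter[OF irr zar_closed_closure] by blast
  then show ?thesis using \<open>infinite Y\<close> \<open>Y \<subseteq> ?C\<close> by (auto simp: zar_dense_in_def Y_def)
qed

theorem lemma3:
  fixes f :: "'a::{alg_closed_field, field_char_0} poly poly"
    and a b d :: 'a
  defines "C \<equiv> zero_set {f}"
  assumes f_irr: "irreducible f"
    and d_nz: "d \<noteq> 0"
    and C0_ne: "{p \<in> C. (fst p - a)^2 + (snd p - b)^2 \<noteq> 0} \<noteq> {}"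
  shows
    "(\<forall>\<Omega>. \<Omega> \<noteq> {} \<and> zar_open_in C \<Omega> \<longrightarrow>
        pi1 ` (conchB f a b d \<inter> pi2 -` \<Omega>) \<noteq> {} \<and>
        zar_dense_in (conchoid f a b d) (pi1 ` (conchB f a b d \<inter> pi2 -` \<Omega>)))
     \<and>
     (C \<noteq> {p. (fst p - a)^2 + (snd p - b)^2 = d^2} \<longrightarrow>
       (\<forall>Z \<Omega>. irred_component (conchoid f a b d) Z \<and> \<Omega> \<noteq> {} \<and> zar_open_in Z \<Omega> \<longrightarrow>
          pi2 ` (conchB f a b d \<inter> pi1 -` \<Omega>) \<noteq> {} \<and>
          zar_dense_in C (pi2 ` (conchB f a b d \<inter> pi1 -` \<Omega>))))"
proof -
  have C0: "{p \<in> zero_set {f}. sq_dist a b p \<noteq> 0} \<noteq> {}"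
    using C0_ne by (simp add: C_def sq_dist_def)
  show ?thesis
    using conchoid_dense_in_pi1_over_open[OF f_irr d_nz C0]
      curve_dense_in_pi2_over_component[OF f_irr d_nz C0]
    unfolding C_def by blast
qed

end
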